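(* For every positive integer $n$, \[\mathrm{Sort}_n(\mathrm{SC}_{1\underline{23}})=\mathrm{Av}_n(132,3214,4213),\] i.e. a permutation $\tau\in\mathfrak S_n$ satisfies $s(\mathrm{SC}_{1\underline{23}}(\tau))=12\cdots n$ if and only if $\tau$ avoids each of the classical patterns $132$, $3214$ and $4213$.
   Context: $\mathfrak S_n$ is the set of permutations of $\{1,\dots,n\}$ in one-line notation. A sequence of distinct numbers is order-isomorphic ($\simeq$) to a permutation $\sigma\in\mathfrak S_k$ if its entries have the same relative order as $\sigma$. A sequence $\tau$ contains a classical pattern $\sigma\in\mathfrak S_k$ if some subsequence $\tau_{i_1}\cdots\tau_{i_k}$ ($i_1<\dots<i_k$) is order-isomorphic to $\sigma$; for a vincular pattern, written with some entries underlined, the occurrence must additionally use consecutive positions for each block of adjacent underlined entries (e.g. an occurrence of $1\underline{23}$ is $\tau_i\tau_j\tau_{j+1}\simeq 123$ with $i<j$). Otherwise $\tau$ avoids $\sigma$. $\mathrm{Av}_n(\dots)$ is the set of permutations in $\mathfrak S_n$ avoiding all listed patterns. For a (possibly vincular) pattern $\sigma$, the $\sigma$-avoiding stack-sorting map $\mathrm{SC}_\sigma$ acts on an input permutation $\tau$ as follows: read the entries of $\tau$ from left to right; when the next entry $x$ is read, if pushing $x$ onto the stack yields a stack whose entries, read from top to bottom, avoid $\sigma$, push $x$; otherwise pop the top entry of the stack to the (right end of the) output and repeat this check. After all input entries are pushed, pop the remaining stack entries to the output. $\mathrm{SC}_\sigma(\tau)$ is the output. The map $s=\mathrm{SC}_{21}$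 is West's stack-sorting map. The sorting class is $\mathrm{Sort}_n(\mathrm{SC}_\sigma)=\{\tau\in\mathfrak S_n : s(\mathrm{SC}_\sigma(\tau))=12\cdots n\}$. *)

theory Defs
  imports Main
begin

definition perms :: "nat \<Rightarrow> nat list set" where
  "perms n = {xs. distinct xs \<and> set xs = {1..n}}"

definition order_iso :: "nat list \<Rightarrow> nat list \<Rightarrow> bool" where
  "order_iso xs ys \<longleftrightarrow> length xs = length ys \<and>
     (\<forall>i<length xs. \<forall>j<length xs. xs ! i < xs ! j \<longleftrightarrow> ys ! i < ys ! j)"

text \<open>A vincular pattern is a pair (sigma, A): sigma is the underlying permutation and
  A is the set of 0-based indices j such that the occurrence must use consecutive positions
  for the pattern entries j and j+1 (i.e. entries j and j+1 are in the same underlined block).\<close>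
type_synonym vpattern = "nat list \<times> nat set"

definition contains :: "nat list \<Rightarrow> vpattern \<Rightarrow> bool" where
  "contains tau p \<longleftrightarrow> (\<exists>idx :: nat list.
      length idx = length (fst p) \<and> sorted_wrt (<) idx \<and> (\<forall>i\<in>set idx. i < length tau) \<and>
      (\<forall>j\<in>snd p. Suc j < length idx \<longrightarrow> idx ! Suc j = Suc (idx ! j)) \<and>
      order_iso (map (\<lambda>i. tau ! i) idx) (fst p))"

definition avoids :: "nat list \<Rightarrow> vpattern \<Rightarrow> bool" where
  "avoids tau p \<longleftrightarrow> \<not> contains tau p"

definition classical :: "nat list \<Rightarrow> vpattern" where
  "classical sigma = (sigma, {})"

text \<open>The pattern 1\<underline>23: entries 2 and 3 (0-based indices 1, 2) adjacent.\<close>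
definition pat_1_23 :: vpattern where
  "pat_1_23 = ([1,2,3], {1})"

definition Av :: "nat \<Rightarrow> vpattern list \<Rightarrow> nat list set" where
  "Av n ps = {tau \<in> perms n. \<forall>p\<in>set ps. avoids tau p}"

text \<open>The stack is a list whose head is the top,
  so the stack read from top to bottom is the list itself.\<close>
fun sc_run :: "vpattern \<Rightarrow> nat list \<Rightarrow> nat list \<Rightarrow> nat list \<Rightarrow> nat list" where
  "sc_run p [] stk out = out @ stk"
| "sc_run p (x # xs) [] out = sc_run p xs [x] out"
| "sc_run p (x # xs) (y # ys) out =
     (if avoids (x # y # ys) p then sc_run p xs (x # y # ys) out
      else sc_run p (x # xs) ys (out @ [y]))"

definition SC :: "vpattern \<Rightarrow> nat list \<Rightarrow> nat list" where
  "SC p tau = sc_run p tau [] []"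

definition west_s :: "nat list \<Rightarrow> nat list" where
  "west_s tau = SC (classical [2,1]) tau"

definition Sort :: "nat \<Rightarrow> vpattern \<Rightarrow> nat list set" where
  "Sort n p = {tau \<in> perms n. west_s (SC p tau) = [1..<n+1]}"

end

theory Submission
  imports Defs "HOL-Library.Sublist" "HOL-Library.Multiset"
begin

(* Write tau = L m R with m its least entry. When m is read, the 1_23-avoiding stack pops
   until what is left is decreasing; what is left is the reversed ascending prefix of L, and
   it stays below m until the end of the run. Hence SC(L m R) = H SC(R) m rev(asc L), where
   SC(L) = H rev(asc L).
   Avoiding 132 makes R increasing, so SC(R) = rev R, and avoiding 3214 and 4213 puts R
   below every entry of H; by induction SC(tau) = H rev(asc tau) with H decreasing, and a 231
   in such a word yields a 132 in tau. Conversely, if SC(L m R) avoids 231 then SC(R) m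
   forces R to be increasing, and the remaining occurrences of 231 that
   H rev(R) m rev(asc L) must avoid are what it takes for avoidance of 132, 3214 and 4213 to
   pass from L to L m R.
   Finally, s(pi) is the identity iff pi avoids 231 (Knuth), by splitting at the greatest
   entry: s(L n R) = s(L) s(R) n. *)

lemma set_subseq: "subseq xs ys \<Longrightarrow> set xs \<subseteq> set ys"
  by (metis subseq_conv_nths set_nths_subset)

lemma distinct_subseq: "subseq xs ys \<Longrightarrow> distinct ys \<Longrightarrow> distinct xs"
  by (metis subseq_conv_nths distinct_nthsI)

lemma sorted_wrt_subseq: "subseq xs ys \<Longrightarrow> sorted_wrt P ys \<Longrightarrow> sorted_wrt P xs"
  by (induction rule: list_emb.induct) (auto dest: set_subseq)

lemma sorted_wrt_iff_subseq: "sorted_wrt P xs \<longleftrightarrow> (\<forall>a b. subseq [a, b] xs \<longrightarrow> P a b)"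
proof (induction xs)
  case (Cons x xs)
  have "subseq [a, b] (x # xs) \<longleftrightarrow> (a = x \<and> b \<in> set xs) \<or> subseq [a, b] xs" for a b
    by (cases "a = x") (auto simp: subseq_singleton_left dest: subseq_Cons')
  then show ?case using Cons.IH by auto
qed simp

lemma subseq_rev: "subseq xs ys \<Longrightarrow> subseq (rev xs) (rev ys)"
  by (induction rule: list_emb.induct) (auto intro: subseq_rev_drop_many list_emb_append_mono)

lemma subseq_pair_if_sorted:
  fixes xs :: "'a::linorder list"
  assumes "sorted_wrt (<) xs" "a \<in> set xs" "b \<in> set xs" "a < b"
  shows "subseq [a, b] xs"
  by (rule sorted_subset_imp_subseq) (use assms in \<open>auto simp: strict_sorted_iff\<close>)

lemma subseq_pair_append_left:
  assumes "subseq [a, b] (P @ Q)" "b \<in> set P" "distinct (P @ Q)"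
  shows "subseq [a, b] P"
proof -
  obtain xs ys where split: "[a, b] = xs @ ys" "subseq xs P" "subseq ys Q"
    using assms(1) by (rule subseq_appendE)
  have "b \<notin> set ys" using set_subseq[OF split(3)] assms(2,3) by auto
  then show ?thesis using split by (auto simp: Cons_eq_append_conv)
qed

lemma ascent_in_append_decreasing:
  fixes X Y :: "'a::linorder list"
  assumes "sorted_wrt (>) X" "sorted_wrt (>) Y" "subseq [a, b, c] (X @ Y)" "a < b"
  shows "a \<in> set X \<and> subseq [b, c] Y"
proof -
  obtain xs ys where split: "[a, b, c] = xs @ ys" "subseq xs X" "subseq ys Y"
    using assms(3) by (rule subseq_appendE)
  have "sorted_wrt (>) xs" "sorted_wrt (>) ys"
    using sorted_wrt_subseq split(2,3) assms(1,2) by blast+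
  with split assms(4) show ?thesis by (auto simp: Cons_eq_append_conv subseq_singleton_left)
qed

lemma subseq_iff_nth_indices:
  "subseq xs ys \<longleftrightarrow>
     (\<exists>idx. sorted_wrt (<) idx \<and> (\<forall>i\<in>set idx. i < length ys) \<and> xs = map ((!) ys) idx)"
proof
  assume "subseq xs ys"
  then show "\<exists>idx. sorted_wrt (<) idx \<and> (\<forall>i\<in>set idx. i < length ys) \<and> xs = map ((!) ys) idx"
  proof (induction rule: list_emb.induct)
    case (list_emb_Nil ys)
    then show ?case by (auto intro: exI[of _ "[]"])
  next
    case (list_emb_Cons xs ys y)
    then obtain idx where "sorted_wrt (<) idx" "\<forall>i\<in>set idx. i < length ys" "xs = map ((!) ys) idx"
      by auto
    then show ?case by (intro exI[of _ "map Suc idx"]) (auto simp: sorted_wrt_map)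
  next
    case (list_emb_Cons2 x y xs ys)
    then obtain idx where "sorted_wrt (<) idx" "\<forall>i\<in>set idx. i < length ys" "xs = map ((!) ys) idx"
      by auto
    then show ?case using list_emb_Cons2
      by (intro exI[of _ "0 # map Suc idx"]) (auto simp: sorted_wrt_map)
  qed
next
  assume "\<exists>idx. sorted_wrt (<) idx \<and> (\<forall>i\<in>set idx. i < length ys) \<and> xs = map ((!) ys) idx"
  then obtain idx
    where idx: "sorted_wrt (<) idx" "\<forall>i\<in>set idx. i < length ys" "xs = map ((!) ys) idx"
    by blast
  have "subseq idx [0..<length ys]"
    by (rule sorted_subset_imp_subseq) (use idx in \<open>auto simp: sorted_wrt_upt\<close>)
  then have "subseq (map ((!) ys) idx) (map ((!) ys) [0..<length ys])" by (rule subseq_map)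
  then show "subseq xs ys" by (simp add: idx(3) map_nth)
qed

lemma subseq3_append_Cons_cases:
  assumes "subseq [a, b, c] (L @ m # R)"
  obtains "subseq [a, b, c] L" | "subseq [a, b] L" "c = m" | "subseq [a, b] L" "c \<in> set R"
    | "a \<in> set L" "b = m" "c \<in> set R" | "a \<in> set L" "subseq [b, c] R"
    | "a = m" "subseq [b, c] R" | "subseq [a, b, c] R"
proof -
  from assms obtain xs ys where split: "[a, b, c] = xs @ ys" "subseq xs L" "subseq ys (m # R)"
    by (auto elim: subseq_appendE)
  have "subseq ys R \<or> (\<exists>ys'. ys = m # ys' \<and> subseq ys' R)"
    using split(3) by (cases ys) (auto split: if_splits dest: subseq_Cons')
  with split that show thesis
    by (auto simp: Cons_eq_append_conv subseq_singleton_left)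
qed

lemma subseq4_append_Cons_cases:
  assumes "subseq [a, b, c, d] (L @ m # R)"
  obtains "subseq [a, b, c, d] L" | "subseq [a, b, c] L" "d = m"
    | "subseq [a, b, c] L" "d \<in> set R"
    | "subseq [a, b] L" "c = m" "d \<in> set R" | "subseq [a, b] L" "subseq [c, d] R"
    | "a \<in> set L" "b = m" "subseq [c, d] R" | "a \<in> set L" "subseq [b, c, d] R"
    | "a = m" "subseq [b, c, d] R" | "subseq [a, b, c, d] R"
proof -
  from assms obtain xs ys where split: "[a, b, c, d] = xs @ ys" "subseq xs L" "subseq ys (m # R)"
    by (auto elim: subseq_appendE)
  have "subseq ys R \<or> (\<exists>ys'. ys = m # ys' \<and> subseq ys' R)"
    using split(3) by (cases ys) (auto split: if_splits dest: subseq_Cons')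
  with split that show thesis
    by (auto simp: Cons_eq_append_conv subseq_singleton_left)
qed

section \<open>Pattern containment\<close>

lemma contains_classical_iff: "contains L (classical \<sigma>) \<longleftrightarrow> (\<exists>xs. subseq xs L \<and> order_iso xs \<sigma>)"
  unfolding contains_def classical_def subseq_iff_nth_indices order_iso_def
  by auto metis

lemma contains_classical_mono: "subseq A B \<Longrightarrow> contains A (classical \<sigma>) \<Longrightarrow> contains B (classical \<sigma>)"
  unfolding contains_classical_iff using subseq_order.trans by blast

lemma avoids_classical_subseq: "subseq A B \<Longrightarrow> avoids B (classical \<sigma>) \<Longrightarrow> avoids A (classical \<sigma>)"
  unfolding avoids_def using contains_classical_mono by blast

lemma contains_classical_length2:
  "contains L (classical [p, q]) \<longleftrightarrow> (\<exists>a b. subseq [a, b] L \<and> order_iso [a, b] [p, q])"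
proof -
  have "\<exists>a b. xs = [a, b]" if "order_iso xs [p, q]" for xs
    using that by (auto simp: order_iso_def length_Suc_conv numeral_2_eq_2)
  then show ?thesis unfolding contains_classical_iff by blast
qed

lemma contains_classical_length3:
  "contains L (classical [p, q, r]) \<longleftrightarrow> (\<exists>a b c. subseq [a, b, c] L \<and> order_iso [a, b, c] [p, q, r])"
proof -
  have "\<exists>a b c. xs = [a, b, c]" if "order_iso xs [p, q, r]" for xs
    using that by (auto simp: order_iso_def length_Suc_conv)
  then show ?thesis unfolding contains_classical_iff by blast
qed

lemma contains_classical_length4:
  "contains L (classical [p, q, r, s]) \<longleftrightarrow>
     (\<exists>a b c d. subseq [a, b, c, d] L \<and> order_iso [a, b, c, d] [p, q, r, s])"
proof -
  have "\<exists>a b c d. xs = [a, b, c, d]" if "order_iso xs [p, q, r, s]" for xs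
    using that by (auto simp: order_iso_def length_Suc_conv)
  then show ?thesis unfolding contains_classical_iff by blast
qed

lemma contains_132_iff:
  "contains L (classical [1,3,2]) \<longleftrightarrow> (\<exists>a b c. subseq [a,b,c] L \<and> a < c \<and> c < b)"
proof -
  have "order_iso [a,b,c] [1,3,2] \<longleftrightarrow> a < c \<and> c < b" for a b c :: nat
    by (auto simp: order_iso_def All_less_Suc)
  then show ?thesis unfolding contains_classical_length3 by simp
qed

lemma contains_231_iff:
  "contains L (classical [2,3,1]) \<longleftrightarrow> (\<exists>a b c. subseq [a,b,c] L \<and> c < a \<and> a < b)"
proof -
  have "order_iso [a,b,c] [2,3,1] \<longleftrightarrow> c < a \<and> a < b" for a b c :: nat
    by (auto simp: order_iso_def All_less_Suc)
  then show ?thesis unfolding contains_classical_length3 by simp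
qed

lemma avoids_21_iff_sorted: "avoids L (classical [2,1]) \<longleftrightarrow> sorted L"
proof -
  have "order_iso [a,b] [2,1] \<longleftrightarrow> b < a" for a b :: nat
    by (auto simp: order_iso_def All_less_Suc)
  then show ?thesis unfolding avoids_def contains_classical_length2 sorted_wrt_iff_subseq
    by (simp add: not_less)
qed

lemma contains_3214_or_4213_iff:
  assumes "distinct L"
  shows "contains L (classical [3,2,1,4]) \<or> contains L (classical [4,2,1,3]) \<longleftrightarrow>
    (\<exists>a b c d. subseq [a,b,c,d] L \<and> c < b \<and> b < a \<and> b < d)"
proof -
  have iso: "order_iso [a,b,c,d] [3,2,1,4] \<longleftrightarrow> c < b \<and> b < a \<and> a < d"
    "order_iso [a,b,c,d] [4,2,1,3] \<longleftrightarrow> c < b \<and> b < d \<and> d < a" for a b c d :: nat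
    by (auto simp: order_iso_def All_less_Suc)
  have "a \<noteq> d" if "subseq [a,b,c,d] L" for a b c d
    using distinct_subseq[OF that assms] by simp
  show ?thesis
  proof
    assume "contains L (classical [3,2,1,4]) \<or> contains L (classical [4,2,1,3])"
    then show "\<exists>a b c d. subseq [a,b,c,d] L \<and> c < b \<and> b < a \<and> b < d"
      unfolding contains_classical_length4 iso by (blast intro: order.strict_trans)
  next
    assume "\<exists>a b c d. subseq [a,b,c,d] L \<and> c < b \<and> b < a \<and> b < d"
    then obtain a b c d where occ: "subseq [a,b,c,d] L" "c < b" "b < a" "b < d" by blast
    with \<open>\<And>a b c d. subseq [a,b,c,d] L \<Longrightarrow> a \<noteq> d\<close> consider "a < d" | "d < a"
      by (meson linorder_neqE_nat)
    then show "contains L (classical [3,2,1,4]) \<or> contains L (classical [4,2,1,3])"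
      unfolding contains_classical_length4 iso using occ by cases blast+
  qed
qed

lemma contains_1_23_iff:
  "contains s pat_1_23 \<longleftrightarrow> (\<exists>i j. i < j \<and> Suc j < length s \<and> s ! i < s ! j \<and> s ! j < s ! Suc j)"
proof
  assume "contains s pat_1_23"
  then obtain idx where idx: "length idx = 3" "sorted_wrt (<) idx" "\<forall>i\<in>set idx. i < length s"
    "idx ! 2 = Suc (idx ! 1)" "order_iso (map ((!) s) idx) [1, 2, 3]"
    unfolding contains_def pat_1_23_def by (auto simp: eval_nat_numeral)
  then obtain i j k where ijk: "idx = [i, j, k]" by (auto simp: numeral_3_eq_3 length_Suc_conv)
  have "s ! i < s ! j" "s ! j < s ! k"
    using idx(5) unfolding ijk order_iso_def by (auto simp: All_less_Suc)
  then show "\<exists>i j. i < j \<and> Suc j < length s \<and> s ! i < s ! j \<and> s ! j < s ! Suc j"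
    using idx unfolding ijk by auto
next
  assume "\<exists>i j. i < j \<and> Suc j < length s \<and> s ! i < s ! j \<and> s ! j < s ! Suc j"
  then obtain i j where "i < j" "Suc j < length s" "s ! i < s ! j" "s ! j < s ! Suc j" by blast
  then show "contains s pat_1_23" unfolding contains_def pat_1_23_def
    by (intro exI[of _ "[i, j, Suc j]"]) (auto simp: order_iso_def All_less_Suc)
qed

lemma contains_append: "contains S p \<Longrightarrow> contains (S @ T) p"
proof -
  assume "contains S p"
  then obtain idx where idx: "length idx = length (fst p)" "sorted_wrt (<) idx"
    "\<forall>i\<in>set idx. i < length S" "\<forall>j\<in>snd p. Suc j < length idx \<longrightarrow> idx ! Suc j = Suc (idx ! j)"
    "order_iso (map ((!) S) idx) (fst p)"
    unfolding contains_def by blast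
  moreover have eq: "map ((!) (S @ T)) idx = map ((!) S) idx"
    using idx(3) by (simp add: nth_append)
  ultimately show "contains (S @ T) p" unfolding contains_def
    by (intro exI[of _ idx]) (auto simp add: eq)
qed

section \<open>Splitting a permutation at its least or greatest entry\<close>

lemma distinct_min_induct [consumes 1, case_names Nil split]:
  fixes xs :: "'a::linorder list"
  assumes "distinct xs"
    and "P []"
    and "\<And>L m R. distinct (L @ m # R) \<Longrightarrow> \<forall>y\<in>set L \<union> set R. m < y \<Longrightarrow> P L \<Longrightarrow> P R \<Longrightarrow>
      P (L @ m # R)"
  shows "P xs"
  using assms(1)
proof (induction "length xs" arbitrary: xs rule: less_induct)
  case less
  show ?case
  proof (cases "xs = []")
    case False
    define m where "m = Min (set xs)"
    have "m \<in> set xs" using False by (simp add: m_def)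
    then obtain L R where xs: "xs = L @ m # R" by (meson split_list)
    have "m \<le> y" if "y \<in> set xs" for y using that by (simp add: m_def)
    then have "\<forall>y\<in>set L \<union> set R. m < y" using less.prems by (auto simp: xs order.strict_iff_order)
    moreover have "P L" "P R" using less xs by auto
    ultimately show ?thesis using assms(3) less.prems xs by blast
  qed (simp add: assms(2))
qed

lemma distinct_max_induct [consumes 1, case_names Nil split]:
  fixes xs :: "'a::linorder list"
  assumes "distinct xs"
    and "P []"
    and "\<And>L n R. distinct (L @ n # R) \<Longrightarrow> \<forall>y\<in>set L \<union> set R. y < n \<Longrightarrow> P L \<Longrightarrow> P R \<Longrightarrow>
      P (L @ n # R)"
  shows "P xs"
  using assms(1)
proof (induction "length xs" arbitrary: xs rule: less_induct)
  case less
  show ?case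
  proof (cases "xs = []")
    case False
    define n where "n = Max (set xs)"
    have "n \<in> set xs" using False by (simp add: n_def)
    then obtain L R where xs: "xs = L @ n # R" by (meson split_list)
    have "y \<le> n" if "y \<in> set xs" for y using that by (simp add: n_def)
    then have "\<forall>y\<in>set L \<union> set R. y < n" using less.prems by (auto simp: xs order.strict_iff_order)
    moreover have "P L" "P R" using less xs by auto
    ultimately show ?thesis using assms(3) less.prems xs by blast
  qed (simp add: assms(2))
qed

lemma contains_231_max_split:
  assumes "\<forall>y\<in>set L \<union> set R. y < n"
  shows "contains (L @ n # R) (classical [2,3,1]) \<longleftrightarrow>
    contains L (classical [2,3,1]) \<or> contains R (classical [2,3,1]) \<or> (\<exists>a\<in>set L. \<exists>c\<in>set R. c < a)"
  unfolding contains_231_iff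
proof
  assume "\<exists>a b c. subseq [a, b, c] (L @ n # R) \<and> c < a \<and> a < b"
  then obtain a b c where occ: "subseq [a, b, c] (L @ n # R)" "c < a" "a < b" by blast
  from occ(1) show "(\<exists>a b c. subseq [a, b, c] L \<and> c < a \<and> a < b) \<or>
      (\<exists>a b c. subseq [a, b, c] R \<and> c < a \<and> a < b) \<or> (\<exists>a\<in>set L. \<exists>c\<in>set R. c < a)"
  proof (cases rule: subseq3_append_Cons_cases)
    case 2
    then have "a < n" using assms set_subseq[OF 2(1)] by auto
    then show ?thesis using occ 2 by simp
  next
    case 3
    then have "a \<in> set L" using set_subseq by fastforce
    then show ?thesis using occ 3 by blast
  next
    case 5
    then have "c \<in> set R" using set_subseq by fastforce
    then show ?thesis using occ 5 by blast
  next
    case 6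
    then have "b < n" using assms set_subseq[OF 6(2)] by auto
    then show ?thesis using occ 6 by simp
  qed (use occ in blast)+
next
  have L: "subseq L (L @ n # R)" and R: "subseq R (L @ n # R)"
    using subseq_drop_many[of R R "L @ [n]"] by (simp_all add: subseq_rev_drop_many)
  assume "(\<exists>a b c. subseq [a, b, c] L \<and> c < a \<and> a < b) \<or>
      (\<exists>a b c. subseq [a, b, c] R \<and> c < a \<and> a < b) \<or> (\<exists>a\<in>set L. \<exists>c\<in>set R. c < a)"
  then show "\<exists>a b c. subseq [a, b, c] (L @ n # R) \<and> c < a \<and> a < b"
  proof (elim disjE exE bexE conjE)
    fix a c assume "a \<in> set L" "c \<in> set R" "c < a"
    moreover from this have "subseq ([a] @ [n, c]) (L @ n # R)"
      by (intro list_emb_append_mono) (auto simp: subseq_singleton_left)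
    ultimately show ?thesis using assms by auto
  qed (use subseq_order.trans[OF _ L] subseq_order.trans[OF _ R] in blast)+
qed

lemma avoids_132_min_split:
  assumes "\<forall>y\<in>set L \<union> set R. m < y" "sorted_wrt (<) R" "avoids L (classical [1,3,2])"
    and cross: "\<And>a b c. subseq [a, b] L \<Longrightarrow> c \<in> set R \<Longrightarrow> \<not> (a < c \<and> c < b)"
  shows "avoids (L @ m # R) (classical [1,3,2])"
  unfolding avoids_def contains_132_iff
proof (intro notI; elim exE conjE)
  fix a b c assume occ: "subseq [a, b, c] (L @ m # R)" "a < c" "c < b"
  from occ(1) show False
  proof (cases rule: subseq3_append_Cons_cases)
    case 1
    then show False using assms(3) occ unfolding avoids_def contains_132_iff by blast
  next
    case 2
    then have "m < a" using assms(1) set_subseq by (fastforce simp: ball_Un)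
    then show False using 2 occ by simp
  next
    case 3
    then show False using cross occ by blast
  next
    case 4
    then show False using assms(1) occ by (fastforce simp: ball_Un)
  next
    case 5
    then show False using sorted_wrt_subseq[OF _ assms(2)] occ by fastforce
  next
    case 6
    then show False using sorted_wrt_subseq[OF _ assms(2)] occ by fastforce
  next
    case 7
    then show False using sorted_wrt_subseq[OF _ assms(2)] occ by fastforce
  qed
qed

lemma avoids_3214_4213_min_split:
  assumes "distinct (L @ m # R)" "\<forall>y\<in>set L \<union> set R. m < y" "sorted_wrt (<) R"
    and "avoids L (classical [3,2,1,4])" "avoids L (classical [4,2,1,3])"
    and cross: "\<And>a b d. subseq [a, b] L \<Longrightarrow> b < a \<Longrightarrow> d \<in> set R \<Longrightarrow> d < b"
  shows "avoids (L @ m # R) (classical [3,2,1,4]) \<and> avoids (L @ m # R) (classical [4,2,1,3])"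
proof -
  have "\<not> (\<exists>a b c d. subseq [a, b, c, d] (L @ m # R) \<and> c < b \<and> b < a \<and> b < d)"
  proof (intro notI; elim exE conjE)
    fix a b c d assume occ: "subseq [a, b, c, d] (L @ m # R)" "c < b" "b < a" "b < d"
    have ab: "subseq [a, b] L" if "subseq [a, b, c] L"
      using that subseq_order.trans[of "[a, b]" "[a, b, c]"] by simp
    from occ(1) show False
    proof (cases rule: subseq4_append_Cons_cases)
      case 1
      have "distinct L" using assms(1) by simp
      then have "\<not> (\<exists>a b c d. subseq [a, b, c, d] L \<and> c < b \<and> b < a \<and> b < d)"
        using assms(4,5) contains_3214_or_4213_iff[of L] unfolding avoids_def by blast
      then show False using 1 occ by blast
    next
      case 2
      then have "m < b" using assms(2) set_subseq by (fastforce simp: ball_Un)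
      then show False using 2 occ by simp
    next
      case 3
      then show False using ab cross[of a b d] occ(3,4) by simp
    next
      case 4
      then show False using cross[of a b d] occ(3,4) by simp
    next
      case 5
      then show False using cross[of a b d] set_subseq[OF 5(2)] occ(3,4) by simp
    next
      case 6
      then have "m < c" using assms(2) set_subseq by (fastforce simp: ball_Un)
      then show False using 6 occ by simp
    next
      case 7
      then show False using sorted_wrt_subseq[OF 7(2) assms(3)] occ(2) by simp
    next
      case 8
      then show False using sorted_wrt_subseq[OF 8(2) assms(3)] occ(2) by simp
    next
      case 9
      then show False using sorted_wrt_subseq[OF 9(1) assms(3)] occ(2) by simp
    qed
  qed
  then show ?thesis using contains_3214_or_4213_iff[OF assms(1)] unfolding avoids_def by blast
qed

lemma sorted_right_of_min_if_avoids_132: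
  assumes "distinct R" "\<forall>y\<in>set R. m < y" "avoids (L @ m # R) (classical [1,3,2])"
  shows "sorted_wrt (<) R"
  unfolding sorted_wrt_iff_subseq
proof (intro allI impI)
  fix u v assume uv: "subseq [u, v] R"
  show "u < v"
  proof (rule ccontr)
    assume "\<not> u < v"
    moreover have "u \<noteq> v" using distinct_subseq[OF uv assms(1)] by simp
    ultimately have "v < u" by simp
    moreover have "m < v" using set_subseq[OF uv] assms(2) by auto
    moreover have "subseq [m, u, v] (L @ m # R)" using uv by (simp add: subseq_drop_many)
    ultimately have "contains (L @ m # R) (classical [1,3,2])" unfolding contains_132_iff by blast
    then show False using assms(3) by (simp add: avoids_def)
  qed
qed

lemma right_of_min_below_inversion:
  assumes "distinct (L @ m # R)" "\<forall>y\<in>set L \<union> set R. m < y"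
    and "avoids (L @ m # R) (classical [3,2,1,4])" "avoids (L @ m # R) (classical [4,2,1,3])"
    and "subseq [a, b] L" "b < a" "d \<in> set R"
  shows "d < b"
proof (rule ccontr)
  assume "\<not> d < b"
  moreover have "b \<in> set L" using set_subseq[OF assms(5)] by simp
  moreover from this have "d \<noteq> b" "m < b" using assms(1,2,7) by auto
  ultimately have "b < d" "m < b" by simp_all
  moreover have "subseq ([a, b] @ [m, d]) (L @ m # R)"
    using assms(5,7) by (intro list_emb_append_mono) (auto simp: subseq_singleton_left)
  ultimately have "\<exists>a b c d. subseq [a, b, c, d] (L @ m # R) \<and> c < b \<and> b < a \<and> b < d"
    using assms(6) by auto
  then show False using assms(3,4) contains_3214_or_4213_iff[OF assms(1)] by (simp add: avoids_def)
qed

section \<open>Pattern-avoiding stacks\<close>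

fun sc_read :: "vpattern \<Rightarrow> nat list \<Rightarrow> nat list \<Rightarrow> nat list \<Rightarrow> nat list \<times> nat list" where
  "sc_read p [] stk out = (out, stk)"
| "sc_read p (x # xs) [] out = sc_read p xs [x] out"
| "sc_read p (x # xs) (y # ys) out =
     (if avoids (x # y # ys) p then sc_read p xs (x # y # ys) out
      else sc_read p (x # xs) ys (out @ [y]))"

lemma sc_run_eq_sc_read: "sc_run p xs stk out = fst (sc_read p xs stk out) @ snd (sc_read p xs stk out)"
  by (induction p xs stk out rule: sc_read.induct) auto

lemma SC_eq_sc_read: "SC p xs = fst (sc_read p xs [] []) @ snd (sc_read p xs [] [])"
  by (simp add: SC_def sc_run_eq_sc_read)

lemma sc_read_append:
  "sc_read p (xs @ ys) stk out = sc_read p ys (snd (sc_read p xs stk out)) (fst (sc_read p xs stk out))"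
  by (induction p xs stk out rule: sc_read.induct) auto

lemma sc_read_output_prefix: "sc_read p xs stk (pre @ out) = apfst ((@) pre) (sc_read p xs stk out)"
  by (induction p xs stk out rule: sc_read.induct) auto

lemma mset_sc_read:
  "mset (fst (sc_read p xs stk out)) + mset (snd (sc_read p xs stk out)) = mset out + mset stk + mset xs"
  by (induction p xs stk out rule: sc_read.induct) auto

lemma mset_SC: "mset (SC p xs) = mset xs"
  using mset_sc_read[of p xs "[]" "[]"] by (simp add: SC_eq_sc_read)

lemma distinct_SC: "distinct (SC p xs) \<longleftrightarrow> distinct xs"
  by (rule mset_eq_imp_distinct_iff[OF mset_SC])

lemma set_sc_read_stack: "set (snd (sc_read p xs stk out)) \<subseteq> set xs \<union> set stk"
  by (induction p xs stk out rule: sc_read.induct) auto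

lemma sc_read_inert_bottom:
  assumes "\<forall>y\<in>set xs \<union> set stk. Q y"
    and "\<And>x. avoids [x] p"
    and "\<And>S. S \<noteq> [] \<Longrightarrow> \<forall>y\<in>set S. Q y \<Longrightarrow> avoids (S @ B) p \<longleftrightarrow> avoids S p"
  shows "sc_read p xs (stk @ B) out = apsnd (\<lambda>S. S @ B) (sc_read p xs stk out)"
  using assms
proof (induction p xs stk out rule: sc_read.induct)
  case (2 p x xs out)
  have "avoids (x # B) p" using "2.prems"(2)[of x] "2.prems"(3)[of "[x]"] "2.prems"(1) by simp
  then show ?case using 2 by (cases B) auto
next
  case (3 p x xs y ys out)
  then show ?case using "3.prems"(3)[of "x # y # ys"] by auto
qed simp

lemma sc_read_push_pops_all:
  assumes "\<forall>y\<in>set stk. y < n" and "\<And>y ys. y < n \<Longrightarrow> \<not> avoids (n # y # ys) p"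
  shows "sc_read p (n # xs) stk out = sc_read p xs [n] (out @ stk)"
  using assms(1) by (induction stk arbitrary: out) (auto simp: assms(2))

section \<open>West's stack-sorting map\<close>

lemma west_s_max_split:
  assumes "\<forall>y\<in>set L \<union> set R. y < n"
  shows "west_s (L @ n # R) = west_s L @ west_s R @ [n]"
proof -
  let ?w = "classical [2,1]"
  obtain O1 S1 where L: "sc_read ?w L [] [] = (O1, S1)" by fastforce
  obtain O2 S2 where R: "sc_read ?w R [] [] = (O2, S2)" by fastforce
  have "\<forall>y\<in>set S1. y < n" using set_sc_read_stack[of ?w L "[]" "[]"] assms L by auto
  \<comment> \<open>avoids_21_iff_sorted is unfolded before simp, which would rewrite the 1 in [2,1] to Suc 0\<close>
  then have "sc_read ?w (n # R) S1 O1 = sc_read ?w R [n] (O1 @ S1)"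
    by (rule sc_read_push_pops_all) (unfold avoids_21_iff_sorted, simp)
  then have "sc_read ?w (L @ n # R) [] [] = sc_read ?w R ([] @ [n]) (O1 @ S1)"
    unfolding sc_read_append L by simp
  also have "\<dots> = apsnd (\<lambda>S. S @ [n]) (sc_read ?w R [] (O1 @ S1))"
    by (rule sc_read_inert_bottom[where Q = "\<lambda>y. y < n"])
      (unfold avoids_21_iff_sorted, use assms in \<open>auto simp: sorted_append less_imp_le\<close>)
  also have "\<dots> = (O1 @ S1 @ O2, S2 @ [n])"
    using sc_read_output_prefix[of ?w R "[]" "O1 @ S1" "[]"] R by simp
  finally show ?thesis using L R unfolding west_s_def SC_eq_sc_read by simp
qed

theorem sorted_west_s_iff_avoids_231:
  assumes "distinct \<pi>"
  shows "sorted (west_s \<pi>) \<longleftrightarrow> avoids \<pi> (classical [2,3,1])"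
  using assms
proof (induction rule: distinct_max_induct)
  case Nil
  then show ?case unfolding avoids_def contains_231_iff by (simp add: west_s_def SC_def)
next
  case (split L n R)
  have "set (west_s xs) = set xs" for xs
    by (metis west_s_def mset_SC set_mset_mset)
  with split show ?case
    unfolding avoids_def contains_231_max_split[OF split(2)] west_s_max_split[OF split(2)]
    by (auto simp: sorted_append not_less intro: less_imp_le)
qed

fun asc_prefix :: "nat list \<Rightarrow> nat list" where
  "asc_prefix (x # y # ys) = (if x < y then x # asc_prefix (y # ys) else [x])"
| "asc_prefix xs = xs"

definition asc_rest :: "nat list \<Rightarrow> nat list" where
  "asc_rest xs = drop (length (asc_prefix xs)) xs"

lemma asc_prefix_append_asc_rest: "asc_prefix xs @ asc_rest xs = xs"
  unfolding asc_rest_def by (induction xs rule: asc_prefix.induct) auto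

lemma set_asc_prefix_subset: "set (asc_prefix xs) \<subseteq> set xs"
  by (metis asc_prefix_append_asc_rest set_append sup_ge1)

lemma asc_prefix_Cons: "\<exists>zs. asc_prefix (x # xs) = x # zs"
  by (cases xs) auto

lemma sorted_asc_prefix: "sorted_wrt (<) (asc_prefix xs)"
proof (induction xs rule: asc_prefix.induct)
  case (1 x y ys)
  obtain zs where "asc_prefix (y # ys) = y # zs" using asc_prefix_Cons by blast
  with 1 show ?case by (auto intro: less_trans)
qed auto

lemma asc_prefix_Nil_iff [simp]: "asc_prefix xs = [] \<longleftrightarrow> xs = []"
  by (cases xs rule: asc_prefix.cases) auto

lemma asc_rest_hd_less:
  assumes "distinct xs" "asc_rest xs = r # rs"
  shows "r < last (asc_prefix xs)"
  using assms unfolding asc_rest_def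
proof (induction xs rule: asc_prefix.induct)
  case (1 x y ys)
  then show ?case by (cases "x < y") (auto simp: asc_prefix_Cons)
qed auto

lemma asc_prefix_sorted: "sorted_wrt (<) xs \<Longrightarrow> asc_prefix xs = xs"
  by (induction xs rule: asc_prefix.induct) auto

lemma asc_prefix_Cons_min: "\<forall>y\<in>set xs. m < y \<Longrightarrow> asc_prefix (m # xs) = m # asc_prefix xs"
  by (cases xs) auto

lemma asc_prefix_append_min:
  "L \<noteq> [] \<Longrightarrow> \<forall>y\<in>set L. m < y \<Longrightarrow> asc_prefix (L @ m # R) = asc_prefix L"
  by (induction L rule: asc_prefix.induct) auto

fun pop_to_decreasing :: "nat list \<Rightarrow> nat list \<times> nat list" where
  "pop_to_decreasing [] = ([], [])"
| "pop_to_decreasing (y # ys) =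
     (if sorted_wrt (>) (y # ys) then ([], y # ys) else apfst ((#) y) (pop_to_decreasing ys))"

lemma pop_to_decreasing_append: "fst (pop_to_decreasing S) @ snd (pop_to_decreasing S) = S"
  by (induction S) auto

lemma sorted_pop_to_decreasing: "sorted_wrt (>) (snd (pop_to_decreasing S))"
  by (induction S) auto

lemma pop_to_decreasing_append_min:
  "\<forall>y\<in>set S. m < y \<Longrightarrow> pop_to_decreasing (S @ [m]) = apsnd (\<lambda>D. D @ [m]) (pop_to_decreasing S)"
  by (induction S) (auto simp: sorted_wrt_append)

lemma pop_to_decreasing_above:
  assumes "sorted_wrt (>) D" "\<not> sorted_wrt (>) (m # D)"
  shows "pop_to_decreasing (A @ m # D) = (A @ [m], D)"
proof (induction A)
  case Nil
  have "pop_to_decreasing D = ([], D)" using assms(1) by (cases D) auto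
  with assms(2) show ?case by simp
next
  case (Cons a A)
  have "\<not> sorted_wrt (>) ((a # A) @ m # D)" using assms(2) unfolding sorted_wrt_append by blast
  with Cons show ?case by simp
qed

section \<open>The 1_23-avoiding stack\<close>

lemma avoids_1_23_Cons_decreasing: "sorted_wrt (>) D \<Longrightarrow> avoids (z # D) pat_1_23"
  unfolding avoids_def contains_1_23_iff
proof clarify
  fix i j assume D: "sorted_wrt (>) D" and ij: "i < j" "Suc j < length (z # D)"
    and asc: "(z # D) ! j < (z # D) ! Suc j"
  then obtain k where "j = Suc k" by (cases j) auto
  with D ij asc show False using sorted_wrt_nth_less[OF D, of k "Suc k"] by simp
qed

lemma contains_1_23_min_Cons:
  assumes "distinct S" "\<forall>y\<in>set S. m < y" "\<not> sorted_wrt (>) S"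
  shows "contains (m # S) pat_1_23"
proof -
  obtain j where j: "Suc j < length S" "\<not> S ! Suc j < S ! j"
    using assms(3) by (auto simp: sorted_wrt_iff_nth_Suc_transp)
  then have "S ! j < S ! Suc j"
    using assms(1) nth_eq_iff_index_eq[OF assms(1), of j "Suc j"]
    by (auto simp: not_less order.order_iff_strict)
  moreover have "m < S ! j" using assms(2) j(1) by simp
  ultimately show ?thesis unfolding contains_1_23_iff
    using j(1) by (intro exI[of _ 0] exI[of _ "Suc j"]) auto
qed

lemma avoids_1_23_min_bottom:
  assumes "\<forall>y\<in>set S \<union> set D. m < y" "sorted_wrt (>) D"
  shows "avoids (S @ m # D) pat_1_23 \<longleftrightarrow> avoids S pat_1_23"
proof
  show "avoids (S @ m # D) pat_1_23 \<Longrightarrow> avoids S pat_1_23"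
    unfolding avoids_def using contains_append by blast
next
  let ?s = "S @ m # D"
  assume "avoids S pat_1_23"
  then have no: "\<not> (i < j \<and> Suc j < length S \<and> S ! i < S ! j \<and> S ! j < S ! Suc j)" for i j
    unfolding avoids_def contains_1_23_iff by blast
  show "avoids ?s pat_1_23"
    unfolding avoids_def contains_1_23_iff
  proof (intro notI; elim exE conjE)
    fix i j assume ij: "i < j" "Suc j < length ?s" and asc: "?s ! i < ?s ! j" "?s ! j < ?s ! Suc j"
    consider "Suc j < length S" | "Suc j = length S" | "j = length S" | "length S < j" by linarith
    then show False
    proof cases
      case 1
      then show False using no[of i j] ij asc by (simp add: nth_append)
    next
      case 2
      then have "S ! j \<in> set S" "?s ! j = S ! j" "?s ! Suc j = m" by (auto simp: nth_append)
      moreover from this(1) have "m < S ! j" using assms(1) by blast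
      ultimately show False using asc(2) by simp
    next
      case 3
      then have "S ! i \<in> set S" "?s ! i = S ! i" "?s ! j = m" using ij(1) by (auto simp: nth_append)
      moreover from this(1) have "m < S ! i" using assms(1) by blast
      ultimately show False using asc(1) by simp
    next
      case 4
      then obtain k where k: "j = length S + Suc k" by (metis add_Suc_right less_imp_Suc_add)
      then show False using asc(2) ij(2) sorted_wrt_nth_less[OF assms(2), of k "Suc k"]
        by (auto simp: nth_append)
    qed
  qed
qed

lemma sc_read_1_23_push_min:
  assumes "distinct S" "\<forall>y\<in>set S. m < y"
  shows "sc_read pat_1_23 (m # xs) S out =
    sc_read pat_1_23 xs (m # snd (pop_to_decreasing S)) (out @ fst (pop_to_decreasing S))"
  using assms
proof (induction S arbitrary: out)
  case (Cons y ys)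
  show ?case
  proof (cases "sorted_wrt (>) (y # ys)")
    case True
    then show ?thesis by (simp add: avoids_1_23_Cons_decreasing)
  next
    case False
    then have "\<not> avoids (m # y # ys) pat_1_23"
      using contains_1_23_min_Cons[OF Cons.prems] by (simp add: avoids_def)
    moreover have "pop_to_decreasing (y # ys) = apfst ((#) y) (pop_to_decreasing ys)"
      unfolding pop_to_decreasing.simps(2) using False by (rule if_not_P)
    ultimately show ?thesis using Cons by simp
  qed
qed simp

lemma sc_read_1_23_min_split:
  assumes "distinct L" "\<forall>y\<in>set L \<union> set R. m < y"
    and L: "sc_read pat_1_23 L [] [] = (O1, S1)" and P: "pop_to_decreasing S1 = (P1, D1)"
    and R: "sc_read pat_1_23 R [] [] = (O2, S2)"
  shows "sc_read pat_1_23 (L @ m # R) [] [] = (O1 @ P1 @ O2, S2 @ m # D1)"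
proof -
  have S1: "distinct S1" "\<forall>y\<in>set S1. m < y"
    using distinct_SC[of pat_1_23 L] set_sc_read_stack[of pat_1_23 L "[]" "[]"] assms(1,2) L
    by (auto simp: SC_eq_sc_read)
  have D1: "sorted_wrt (>) D1" "set D1 \<subseteq> set S1"
    using sorted_pop_to_decreasing[of S1] pop_to_decreasing_append[of S1] P by auto
  have "sc_read pat_1_23 (L @ m # R) [] [] = sc_read pat_1_23 (m # R) S1 O1"
    by (simp add: sc_read_append L)
  also have "\<dots> = sc_read pat_1_23 R ([] @ m # D1) (O1 @ P1)"
    using sc_read_1_23_push_min[OF S1] P by simp
  also have "\<dots> = apsnd (\<lambda>S. S @ m # D1) (sc_read pat_1_23 R [] (O1 @ P1))"
  proof (rule sc_read_inert_bottom[where Q = "\<lambda>y. m < y"])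
    show "avoids [x] pat_1_23" for x by (simp add: avoids_def contains_1_23_iff)
    show "avoids (S @ m # D1) pat_1_23 \<longleftrightarrow> avoids S pat_1_23" if "\<forall>y\<in>set S. m < y" for S
      using avoids_1_23_min_bottom[OF _ D1(1)] that D1(2) S1(2) by blast
  qed (use assms(2) in auto)
  also have "\<dots> = (O1 @ P1 @ O2, S2 @ m # D1)"
    using sc_read_output_prefix[of pat_1_23 R "[]" "O1 @ P1" "[]"] R by simp
  finally show ?thesis .
qed

lemma pop_to_decreasing_sc_read_1_23:
  assumes "distinct xs"
  shows "snd (pop_to_decreasing (snd (sc_read pat_1_23 xs [] []))) = rev (asc_prefix xs)"
  using assms
proof (induction rule: distinct_min_induct)
  case (split L m R)
  obtain O1 S1 where L: "sc_read pat_1_23 L [] [] = (O1, S1)" by fastforce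
  obtain P1 D1 where P: "pop_to_decreasing S1 = (P1, D1)" by fastforce
  obtain O2 S2 where R: "sc_read pat_1_23 R [] [] = (O2, S2)" by fastforce
  have LmR: "snd (sc_read pat_1_23 (L @ m # R) [] []) = S2 @ m # D1"
    using sc_read_1_23_min_split[OF _ split(2) L P R] split(1) by simp
  have D1: "D1 = rev (asc_prefix L)" using split.IH(1) L P by simp
  have S2: "\<forall>y\<in>set S2. m < y" using set_sc_read_stack[of pat_1_23 R "[]" "[]"] R split(2) by auto
  show ?case
  proof (cases "L = []")
    case True
    then have "pop_to_decreasing (S2 @ m # D1) = apsnd (\<lambda>D. D @ [m]) (pop_to_decreasing S2)"
      using pop_to_decreasing_append_min[OF S2] D1 by simp
    then show ?thesis using LmR True split.IH(2) R asc_prefix_Cons_min split(2) by simp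
  next
    case False
    then obtain d where "d \<in> set D1" using D1 by (cases "asc_prefix L") auto
    moreover have "set D1 \<subseteq> set L" using D1 set_asc_prefix_subset by simp
    ultimately have "m < d" using split(2) by blast
    with \<open>d \<in> set D1\<close> have "\<not> sorted_wrt (>) (m # D1)"
      using less_asym by fastforce
    then have "pop_to_decreasing (S2 @ m # D1) = (S2 @ [m], D1)"
      using pop_to_decreasing_above sorted_pop_to_decreasing[of S1] P by simp
    then show ?thesis using LmR D1 asc_prefix_append_min[OF False] split(2) by simp
  qed
qed simp

lemma SC_1_23_asc_prefix:
  assumes "distinct xs"
  obtains H where "SC pat_1_23 xs = H @ rev (asc_prefix xs)"
proof
  let ?r = "sc_read pat_1_23 xs [] []"
  show "SC pat_1_23 xs = (fst ?r @ fst (pop_to_decreasing (snd ?r))) @ rev (asc_prefix xs)"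
    using pop_to_decreasing_append[of "snd ?r"] pop_to_decreasing_sc_read_1_23[OF assms]
    by (simp add: SC_eq_sc_read)
qed

lemma mset_SC_1_23_head:
  "SC pat_1_23 xs = H @ rev (asc_prefix xs) \<Longrightarrow> mset H = mset (asc_rest xs)"
  using mset_SC[of pat_1_23 xs] arg_cong[OF asc_prefix_append_asc_rest[of xs], of mset]
  by (metis add.commute add_right_imp_eq mset_append mset_rev)

lemma set_SC_1_23_head: "SC pat_1_23 xs = H @ rev (asc_prefix xs) \<Longrightarrow> set H = set (asc_rest xs)"
  by (metis mset_SC_1_23_head mset_eq_setD)

lemma SC_1_23_min_split:
  assumes "distinct (L @ m # R)" "\<forall>y\<in>set L \<union> set R. m < y"
    and "SC pat_1_23 L = H @ rev (asc_prefix L)"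
  shows "SC pat_1_23 (L @ m # R) = H @ SC pat_1_23 R @ m # rev (asc_prefix L)"
proof -
  obtain O1 S1 where L: "sc_read pat_1_23 L [] [] = (O1, S1)" by fastforce
  obtain P1 D1 where P: "pop_to_decreasing S1 = (P1, D1)" by fastforce
  obtain O2 S2 where R: "sc_read pat_1_23 R [] [] = (O2, S2)" by fastforce
  have D1: "D1 = rev (asc_prefix L)" using pop_to_decreasing_sc_read_1_23[of L] assms(1) L P by simp
  have "SC pat_1_23 L = (O1 @ P1) @ D1"
    using pop_to_decreasing_append[of S1] L P by (simp add: SC_eq_sc_read)
  then have "H = O1 @ P1" using assms(3) D1 by simp
  then show ?thesis
    using sc_read_1_23_min_split[OF _ assms(2) L P R] assms(1) D1 L R by (simp add: SC_eq_sc_read)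
qed

lemma SC_1_23_sorted:
  assumes "sorted_wrt (<) xs"
  shows "SC pat_1_23 xs = rev xs"
proof -
  obtain H where H: "SC pat_1_23 xs = H @ rev (asc_prefix xs)"
    using SC_1_23_asc_prefix assms strict_sorted_iff by blast
  have "length (SC pat_1_23 xs) = length xs" using mset_SC by (metis size_mset)
  then show ?thesis using H asc_prefix_sorted[OF assms] by simp
qed

lemma sorted_if_SC_1_23_decreasing:
  assumes "distinct xs" "sorted_wrt (>) (SC pat_1_23 xs)"
  shows "sorted_wrt (<) xs"
proof (cases "asc_rest xs")
  case Nil
  then show ?thesis using asc_prefix_append_asc_rest[of xs] sorted_asc_prefix[of xs] by simp
next
  case (Cons r rs)
  obtain H where H: "SC pat_1_23 xs = H @ rev (asc_prefix xs)" using SC_1_23_asc_prefix assms(1) by blast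
  have "r \<in> set H" using set_SC_1_23_head[OF H] Cons by simp
  moreover have "last (asc_prefix xs) \<in> set (rev (asc_prefix xs))"
    using Cons asc_prefix_append_asc_rest[of xs] by (cases "asc_prefix xs = []") auto
  ultimately have "last (asc_prefix xs) < r" using assms(2) H by (simp add: sorted_wrt_append)
  then show ?thesis using asc_rest_hd_less[OF assms(1) Cons] by simp
qed

section \<open>Permutations sorted by s after SC_1_23\<close>

lemma asc_rest_above_right_of_min:
  assumes "distinct (L @ m # R)" "\<forall>y\<in>set L \<union> set R. m < y"
    and "avoids (L @ m # R) (classical [3,2,1,4])" "avoids (L @ m # R) (classical [4,2,1,3])"
    and "h \<in> set (asc_rest L)" "d \<in> set R"
  shows "d < h"
proof -
  note below = right_of_min_below_inversion[OF assms(1-4) _ _ assms(6)]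
  obtain r rs where rest: "asc_rest L = r # rs" using assms(5) by (cases "asc_rest L") auto
  have L: "L = asc_prefix L @ r # rs" using asc_prefix_append_asc_rest[of L] rest by simp
  have "asc_prefix L \<noteq> []" using rest by (auto simp: asc_rest_def)
  then have "subseq ([last (asc_prefix L)] @ [r]) (asc_prefix L @ r # rs)"
    by (intro list_emb_append_mono) (auto simp: subseq_singleton_left)
  then have "subseq [last (asc_prefix L), r] L" by (subst L) simp
  moreover have "r < last (asc_prefix L)" using asc_rest_hd_less rest assms(1) by simp
  ultimately have "d < r" by (rule below)
  show "d < h"
  proof (cases "h = r")
    case False
    then have "h \<in> set rs" using assms(5) rest by simp
    then have "subseq [r, h] (asc_prefix L @ r # rs)"
      by (intro subseq_drop_many) (simp add: subseq_singleton_left)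
    then have rh: "subseq [r, h] L" by (subst L)
    show ?thesis
    proof (cases "h < r")
      case True
      then show ?thesis using below[OF rh] by simp
    next
      case False
      then show ?thesis using \<open>d < r\<close> by simp
    qed
  qed (use \<open>d < r\<close> in simp)
qed

lemma asc_rest_below_asc_prefix:
  assumes "distinct xs" "avoids xs (classical [1,3,2])"
    and "asc_rest xs = r # rs" "a \<in> set (asc_prefix xs)"
  shows "r < a"
proof (rule ccontr)
  define P where "P = asc_prefix xs"
  have xs: "xs = P @ r # rs" using asc_prefix_append_asc_rest[of xs] assms(3) by (simp add: P_def)
  have "P \<noteq> []" using assms(4) by (auto simp: P_def)
  have "r \<notin> set P" using assms(1) xs by auto
  moreover assume "\<not> r < a"
  ultimately have "a < r" using assms(4) by (cases "a = r") (auto simp: P_def)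
  moreover have "r < last P" using asc_rest_hd_less assms(1,3) by (simp add: P_def)
  ultimately have "subseq [a, last P] P"
    using subseq_pair_if_sorted[OF sorted_asc_prefix assms(4)] \<open>P \<noteq> []\<close> by (simp add: P_def)
  then have "subseq ([a, last P] @ [r]) xs"
    unfolding xs by (intro list_emb_append_mono) (auto simp: subseq_singleton_left)
  then have "contains xs (classical [1,3,2])"
    using \<open>a < r\<close> \<open>r < last P\<close> unfolding contains_132_iff by (metis append_Cons append_Nil)
  then show False using assms(2) by (simp add: avoids_def)
qed

lemma SC_1_23_decreasing_head:
  assumes "distinct xs" "avoids xs (classical [1,3,2])"
    and "avoids xs (classical [3,2,1,4])" "avoids xs (classical [4,2,1,3])"
  shows "\<exists>H. SC pat_1_23 xs = H @ rev (asc_prefix xs) \<and> sorted_wrt (>) H"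
  using assms
proof (induction rule: distinct_min_induct)
  case Nil
  then show ?case by (simp add: SC_def)
next
  case (split L m R)
  have "subseq L (L @ m # R)" by (simp add: subseq_rev_drop_many)
  with split.prems obtain H1 where H1: "SC pat_1_23 L = H1 @ rev (asc_prefix L)" "sorted_wrt (>) H1"
    using split.IH(1) avoids_classical_subseq by blast
  have "sorted_wrt (<) R"
    by (rule sorted_right_of_min_if_avoids_132[OF _ _ split.prems(1)]) (use split(1,2) in auto)
  then have SC: "SC pat_1_23 (L @ m # R) = H1 @ rev R @ m # rev (asc_prefix L)"
    using SC_1_23_min_split[OF split(1,2) H1(1)] SC_1_23_sorted by simp
  show ?case
  proof (cases "L = []")
    case True
    then have "H1 = []" using H1(1) by (simp add: SC_def)
    moreover have "asc_prefix (m # R) = m # R"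
      using \<open>sorted_wrt (<) R\<close> split(2) by (simp add: asc_prefix_sorted)
    ultimately show ?thesis using SC True by simp
  next
    case False
    have "x < h" if "h \<in> set H1" "x \<in> set (rev R @ [m])" for h x
    proof -
      have "h \<in> set (asc_rest L)" using set_SC_1_23_head[OF H1(1)] that(1) by simp
      moreover from this have "m < h"
        using split(2) asc_prefix_append_asc_rest[of L] by (metis Un_iff set_append)
      ultimately show ?thesis
        using that(2) asc_rest_above_right_of_min[OF split(1,2) split.prems(2,3)] by auto
    qed
    then have "sorted_wrt (>) (H1 @ rev R @ [m])"
      using H1(2) \<open>sorted_wrt (<) R\<close> split(2) by (auto simp: sorted_wrt_append sorted_wrt_rev)
    then show ?thesis using SC asc_prefix_append_min[OF False] split(2) by (intro exI) simp
  qed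
qed

lemma SC_1_23_avoids_231_if_avoids_132_3214_4213:
  assumes "distinct xs" "avoids xs (classical [1,3,2])"
    and "avoids xs (classical [3,2,1,4])" "avoids xs (classical [4,2,1,3])"
  shows "avoids (SC pat_1_23 xs) (classical [2,3,1])"
proof -
  obtain H where H: "SC pat_1_23 xs = H @ rev (asc_prefix xs)" "sorted_wrt (>) H"
    using SC_1_23_decreasing_head[OF assms] by blast
  have "\<not> (subseq [a, b, c] (SC pat_1_23 xs) \<and> c < a \<and> a < b)" for a b c
  proof
    assume occ: "subseq [a, b, c] (SC pat_1_23 xs) \<and> c < a \<and> a < b"
    have "sorted_wrt (>) (rev (asc_prefix xs))" by (simp add: sorted_wrt_rev sorted_asc_prefix)
    then have "a \<in> set H" and "subseq [b, c] (rev (asc_prefix xs))"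
      using ascent_in_append_decreasing[OF H(2)] occ H(1) by auto
    then have "a \<in> set (asc_rest xs)" "subseq [c, b] (asc_prefix xs)"
      using set_SC_1_23_head[OF H(1)] subseq_rev by fastforce+
    then have "subseq ([c, b] @ [a]) xs"
      by (subst asc_prefix_append_asc_rest[symmetric], intro list_emb_append_mono)
        (auto simp: subseq_singleton_left)
    then show False using assms(2) occ unfolding avoids_def contains_132_iff by auto
  qed
  then show ?thesis unfolding avoids_def contains_231_iff by blast
qed

lemma sorted_right_of_min_if_SC_1_23_avoids_231:
  assumes "distinct (L @ m # R)" "\<forall>y\<in>set L \<union> set R. m < y"
    and "avoids (SC pat_1_23 (L @ m # R)) (classical [2,3,1])"
  shows "sorted_wrt (<) R"
proof -
  obtain H where "SC pat_1_23 L = H @ rev (asc_prefix L)"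
    using SC_1_23_asc_prefix assms(1) by (metis distinct_append)
  then have S: "SC pat_1_23 (L @ m # R) = H @ SC pat_1_23 R @ m # rev (asc_prefix L)"
    by (rule SC_1_23_min_split[OF assms(1,2)])
  have "sorted_wrt (>) (SC pat_1_23 R)"
    unfolding sorted_wrt_iff_subseq
  proof (intro allI impI)
    fix u v assume uv: "subseq [u, v] (SC pat_1_23 R)"
    have "distinct (SC pat_1_23 R)" using assms(1) distinct_SC by simp
    then have "u \<noteq> v" using distinct_subseq[OF uv] by simp
    have "set (SC pat_1_23 R) = set R" by (metis mset_SC set_mset_mset)
    then have "m < u" using set_subseq[OF uv] assms(2) by auto
    have "subseq ([u, v] @ [m]) (SC pat_1_23 R @ m # rev (asc_prefix L))"
      using uv by (intro list_emb_append_mono) auto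
    then have "subseq [u, v, m] (SC pat_1_23 (L @ m # R))" unfolding S by (simp add: subseq_drop_many)
    moreover have "\<not> (subseq [u, v, m] (SC pat_1_23 (L @ m # R)) \<and> m < u \<and> u < v)"
      using assms(3) unfolding avoids_def contains_231_iff by blast
    ultimately show "v < u" using \<open>u \<noteq> v\<close> \<open>m < u\<close> by auto
  qed
  then show ?thesis using sorted_if_SC_1_23_decreasing assms(1) by simp
qed

lemma right_of_min_below_SC_1_23_head:
  assumes "distinct (L @ m # R)" "\<forall>y\<in>set L \<union> set R. m < y"
    and "avoids (SC pat_1_23 (L @ m # R)) (classical [2,3,1])"
    and H: "SC pat_1_23 L = H @ rev (asc_prefix L)" and "h \<in> set H" "c \<in> set R"
  shows "c < h"
proof -
  have "SC pat_1_23 (L @ m # R) = H @ rev R @ [m] @ rev (asc_prefix L)"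
    using SC_1_23_min_split[OF assms(1,2) H] sorted_right_of_min_if_SC_1_23_avoids_231[OF assms(1-3)]
      SC_1_23_sorted by simp
  moreover have "subseq ([h] @ [c] @ [m]) (H @ rev R @ [m] @ rev (asc_prefix L))"
    using assms(5,6) by (intro list_emb_append_mono) (auto simp: subseq_singleton_left)
  moreover have "h \<in> set L"
    using set_SC_1_23_head[OF H] assms(5) asc_prefix_append_asc_rest[of L] by (metis Un_iff set_append)
  then have "h \<noteq> c" "m < h" using assms(1,2,6) by auto
  moreover have "\<not> (subseq [h, c, m] (SC pat_1_23 (L @ m # R)) \<and> m < h \<and> h < c)"
    using assms(3) unfolding avoids_def contains_231_iff by blast
  ultimately show ?thesis by auto
qed

lemma right_of_min_outside_asc_prefix:
  assumes "distinct (L @ m # R)" "\<forall>y\<in>set L \<union> set R. m < y"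
    and "avoids (SC pat_1_23 (L @ m # R)) (classical [2,3,1])"
    and "a \<in> set (asc_prefix L)" "b \<in> set (asc_prefix L)" "c \<in> set R"
  shows "\<not> (a < c \<and> c < b)"
proof
  assume acb: "a < c \<and> c < b"
  obtain H where H: "SC pat_1_23 L = H @ rev (asc_prefix L)"
    using SC_1_23_asc_prefix assms(1) by (metis distinct_append)
  have S: "SC pat_1_23 (L @ m # R) = H @ rev R @ m # rev (asc_prefix L)"
    using SC_1_23_min_split[OF assms(1,2) H] sorted_right_of_min_if_SC_1_23_avoids_231[OF assms(1-3)]
      SC_1_23_sorted by simp
  have "subseq [a, b] (asc_prefix L)"
    using subseq_pair_if_sorted[OF sorted_asc_prefix assms(4,5)] acb by simp
  then have "subseq [b, a] (rev (asc_prefix L))" using subseq_rev by fastforce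
  moreover have "subseq [c] (rev R)" using assms(6) by (simp add: subseq_singleton_left)
  ultimately have "subseq ([c] @ [b, a]) (rev R @ m # rev (asc_prefix L))"
    by (intro list_emb_append_mono list_emb_Cons)
  then have "subseq [c, b, a] (SC pat_1_23 (L @ m # R))" unfolding S by (simp add: subseq_drop_many)
  then show False using assms(3) acb unfolding avoids_def contains_231_iff by blast
qed

lemma avoids_132_min_split_if_SC_1_23_avoids_231:
  assumes "distinct (L @ m # R)" "\<forall>y\<in>set L \<union> set R. m < y"
    and "avoids (SC pat_1_23 (L @ m # R)) (classical [2,3,1])" "avoids L (classical [1,3,2])"
  shows "avoids (L @ m # R) (classical [1,3,2])"
proof (rule avoids_132_min_split[OF assms(2) sorted_right_of_min_if_SC_1_23_avoids_231[OF assms(1-3)]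
      assms(4)])
  have "distinct L" using assms(1) by simp
  then obtain H where H: "SC pat_1_23 L = H @ rev (asc_prefix L)" by (rule SC_1_23_asc_prefix)
  note below_H = right_of_min_below_SC_1_23_head[OF assms(1-3) H]
  have setH: "set H = set (asc_rest L)" by (rule set_SC_1_23_head[OF H])
  fix a b c assume ab: "subseq [a, b] L" and c: "c \<in> set R"
  have "a \<in> set L" "b \<in> set L" using set_subseq[OF ab] by auto
  then consider "a \<in> set H" | "a \<in> set (asc_prefix L)" "b \<in> set H"
    | "a \<in> set (asc_prefix L)" "b \<in> set (asc_prefix L)"
    using setH asc_prefix_append_asc_rest[of L] by (metis Un_iff set_append)
  then show "\<not> (a < c \<and> c < b)"
  proof cases
    case 1
    then show ?thesis using below_H c by fastforce
  next
    case 2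
    then obtain r rs where rest: "asc_rest L = r # rs" using setH by (cases "asc_rest L") auto
    then have "c < r" using below_H setH c by simp
    moreover have "r < a" using asc_rest_below_asc_prefix[OF \<open>distinct L\<close> assms(4) rest 2(1)] .
    ultimately show ?thesis by simp
  next
    case 3
    then show ?thesis using right_of_min_outside_asc_prefix[OF assms(1-3) _ _ c] by blast
  qed
qed

lemma avoids_3214_4213_min_split_if_SC_1_23_avoids_231:
  assumes "distinct (L @ m # R)" "\<forall>y\<in>set L \<union> set R. m < y"
    and "avoids (SC pat_1_23 (L @ m # R)) (classical [2,3,1])"
    and "avoids L (classical [3,2,1,4])" "avoids L (classical [4,2,1,3])"
  shows "avoids (L @ m # R) (classical [3,2,1,4]) \<and> avoids (L @ m # R) (classical [4,2,1,3])"
proof (rule avoids_3214_4213_min_split[OF assms(1,2)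
      sorted_right_of_min_if_SC_1_23_avoids_231[OF assms(1-3)] assms(4,5)])
  have "distinct L" using assms(1) by simp
  then obtain H where H: "SC pat_1_23 L = H @ rev (asc_prefix L)" by (rule SC_1_23_asc_prefix)
  fix a b d assume ab: "subseq [a, b] L" "b < a" and d: "d \<in> set R"
  show "d < b"
  proof (cases "b \<in> set H")
    case True
    then show ?thesis using right_of_min_below_SC_1_23_head[OF assms(1-3) H _ d] by simp
  next
    case False
    then have "b \<in> set (asc_prefix L)"
      using set_subseq[OF ab(1)] set_SC_1_23_head[OF H] asc_prefix_append_asc_rest[of L]
      by (metis Un_iff insert_subset list.set(2) set_append)
    then have "subseq [a, b] (asc_prefix L)"
      using subseq_pair_append_left[of a b "asc_prefix L" "asc_rest L"] ab(1)
        asc_prefix_append_asc_rest[of L] \<open>distinct L\<close> by simp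
    then show ?thesis using sorted_wrt_subseq[OF _ sorted_asc_prefix] ab(2) by fastforce
  qed
qed

lemma avoids_132_3214_4213_if_SC_1_23_avoids_231:
  assumes "distinct xs" "avoids (SC pat_1_23 xs) (classical [2,3,1])"
  shows "avoids xs (classical [1,3,2]) \<and> avoids xs (classical [3,2,1,4]) \<and>
    avoids xs (classical [4,2,1,3])"
  using assms
proof (induction rule: distinct_min_induct)
  case Nil
  show ?case unfolding avoids_def contains_132_iff contains_classical_length4 by simp
next
  case (split L m R)
  obtain H where H: "SC pat_1_23 L = H @ rev (asc_prefix L)"
    using SC_1_23_asc_prefix split(1) by (metis distinct_append)
  have "subseq (SC pat_1_23 L) (SC pat_1_23 (L @ m # R))"
    unfolding SC_1_23_min_split[OF split(1,2) H] H
    using subseq_drop_many[OF subseq_order.refl, of "rev (asc_prefix L)" "SC pat_1_23 R @ [m]"]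
    by (simp add: subseq_append')
  then have "avoids L (classical [1,3,2])" "avoids L (classical [3,2,1,4])"
    "avoids L (classical [4,2,1,3])"
    using split.IH(1) split.prems avoids_classical_subseq by blast+
  then show ?case
    using avoids_132_min_split_if_SC_1_23_avoids_231[OF split(1,2) split.prems]
      avoids_3214_4213_min_split_if_SC_1_23_avoids_231[OF split(1,2) split.prems]
    by blast
qed

theorem SC_1_23_avoids_231_iff:
  assumes "distinct xs"
  shows "avoids (SC pat_1_23 xs) (classical [2,3,1]) \<longleftrightarrow>
    avoids xs (classical [1,3,2]) \<and> avoids xs (classical [3,2,1,4]) \<and> avoids xs (classical [4,2,1,3])"
  using SC_1_23_avoids_231_if_avoids_132_3214_4213 avoids_132_3214_4213_if_SC_1_23_avoids_231 assms by blast

lemma eq_upt_iff_sorted: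
  assumes "distinct xs" "set xs = {1..n}"
  shows "xs = [1..<n+1] \<longleftrightarrow> sorted xs"
proof
  show "sorted xs" if "xs = [1..<n+1]" using that by (simp only: sorted_upt)
  show "xs = [1..<n+1]" if "sorted xs"
  proof (rule sorted_distinct_set_unique[OF that assms(1) sorted_upt distinct_upt])
    show "set xs = set [1..<n+1]" unfolding set_upt assms(2) by auto
  qed
qed

theorem mainTheorem1:
  fixes n :: nat
  assumes "n \<ge> 1"
  shows "Sort n pat_1_23 = Av n [classical [1,3,2], classical [3,2,1,4], classical [4,2,1,3]]"
proof -
  have "west_s (SC pat_1_23 \<tau>) = [1..<n+1] \<longleftrightarrow>
      avoids \<tau> (classical [1,3,2]) \<and> avoids \<tau> (classical [3,2,1,4]) \<and> avoids \<tau> (classical [4,2,1,3])"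
    if "\<tau> \<in> perms n" for \<tau>
  proof -
    let ?w = "west_s (SC pat_1_23 \<tau>)"
    have \<tau>: "distinct \<tau>" "set \<tau> = {1..n}" using that by (auto simp: perms_def)
    have "mset ?w = mset \<tau>" by (simp add: west_s_def mset_SC)
    then have "distinct ?w" "set ?w = {1..n}"
      using \<tau> by (metis mset_eq_imp_distinct_iff, metis mset_eq_setD)
    then have "?w = [1..<n+1] \<longleftrightarrow> sorted ?w" by (rule eq_upt_iff_sorted)
    also have "\<dots> \<longleftrightarrow> avoids (SC pat_1_23 \<tau>) (classical [2,3,1])"
      by (rule sorted_west_s_iff_avoids_231) (simp add: distinct_SC \<tau>(1))
    also have "\<dots> \<longleftrightarrow> avoids \<tau> (classical [1,3,2]) \<and> avoids \<tau> (classical [3,2,1,4]) \<and>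
        avoids \<tau> (classical [4,2,1,3])"
      by (rule SC_1_23_avoids_231_iff[OF \<tau>(1)])
    finally show ?thesis .
  qed
  then show ?thesis unfolding Sort_def Av_def by auto
qed

end
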